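(* Let $A$ be a set of parameters of cardinality $n$ and let $N:A\times[0,1]\to A\times[0,1]$ be a fuzzy soft negation. Then $N$ has at most $n$ equilibrium points.
   Context: For pairs with the same first coordinate, $(a,x)\le(a,y)$ iff $x\le y$, and $(a,x)\ge(a,y)$ iff $x\ge y$. A fuzzy soft negation is a map $N:A\times[0,1]\to A\times[0,1]$ such that: (i) $N(a,1)=(a,0)$ and $N(a,0)=(a,1)$ for all $a\in A$; (ii) if $x\le y$ then $N(a,x)\ge N(a,y)$, for all $a\in A$, $x,y\in[0,1]$; (iii) $N(N(a,x))=(a,x)$ for all $a\in A$, $x\in[0,1]$. A point $(a,x)\in A\times[0,1]$ is an equilibrium point of $N$ if $N(a,x)=(a,x)$. *)

theory Defs
  imports Main "HOL.Real"
begin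

definition soft_le :: "'a \<times> real \<Rightarrow> 'a \<times> real \<Rightarrow> bool" where
  "soft_le p q \<longleftrightarrow> fst p = fst q \<and> snd p \<le> snd q"

definition fuzzy_soft_negation :: "'a set \<Rightarrow> ('a \<times> real \<Rightarrow> 'a \<times> real) \<Rightarrow> bool" where
  "fuzzy_soft_negation A N \<longleftrightarrow>
     (\<forall>a\<in>A. \<forall>x\<in>{0..1}. N (a, x) \<in> A \<times> {0..1}) \<and>
     (\<forall>a\<in>A. N (a, 1) = (a, 0) \<and> N (a, 0) = (a, 1)) \<and>
     (\<forall>a\<in>A. \<forall>x\<in>{0..1}. \<forall>y\<in>{0..1}. x \<le> y \<longrightarrow> soft_le (N (a, y)) (N (a, x))) \<and>
     (\<forall>a\<in>A. \<forall>x\<in>{0..1}. N (N (a, x)) = (a, x))"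

definition equilibrium_points :: "'a set \<Rightarrow> ('a \<times> real \<Rightarrow> 'a \<times> real) \<Rightarrow> ('a \<times> real) set" where
  "equilibrium_points A N = {p \<in> A \<times> {0..1}. N p = p}"

end

theory Submission
  imports Defs
begin

(* For each parameter a, the map x \<mapsto> N (a, x) is antitone on the chain [0,1], and an antitone
   map of a chain has at most one fixed point: x \<le> y forces y = N y \<le> N x = x.  So every
   parameter carries at most one equilibrium point, i.e. projecting the equilibrium points
   to their parameters is injective into A. *)

lemma fuzzy_soft_negation_antitone:
  assumes "fuzzy_soft_negation A N" "a \<in> A" "x \<in> {0..1}" "y \<in> {0..1}" "x \<le> y"
  shows "soft_le (N (a, y)) (N (a, x))"
  using assms unfolding fuzzy_soft_negation_def by blast

lemma fuzzy_soft_negation_fixed_point_unique: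
  assumes neg: "fuzzy_soft_negation A N" and "a \<in> A"
    and x: "x \<in> {0..1}" "N (a, x) = (a, x)"
    and y: "y \<in> {0..1}" "N (a, y) = (a, y)"
  shows "x = y"
proof -
  have le_imp_ge: "v \<le> u"
    if "u \<le> v" "u \<in> {0..1}" "v \<in> {0..1}" "N (a, u) = (a, u)" "N (a, v) = (a, v)" for u v
    using fuzzy_soft_negation_antitone[OF neg \<open>a \<in> A\<close> that(2,3,1)] that(4,5)
    by (simp add: soft_le_def)
  show ?thesis
    using le_imp_ge[OF _ x(1) y(1) x(2) y(2)] le_imp_ge[OF _ y(1) x(1) y(2) x(2)]
    by linarith
qed

lemma inj_on_fst_equilibrium_points:
  assumes "fuzzy_soft_negation A N"
  shows "inj_on fst (equilibrium_points A N)"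
  using fuzzy_soft_negation_fixed_point_unique[OF assms]
  by (auto simp: inj_on_def equilibrium_points_def)

lemma fst_equilibrium_points_subset: "fst ` equilibrium_points A N \<subseteq> A"
  by (auto simp: equilibrium_points_def)

theorem theorem3p3:
  fixes A :: "'a set" and N :: "'a \<times> real \<Rightarrow> 'a \<times> real" and n :: nat
  assumes "finite A" and "card A = n"
    and "fuzzy_soft_negation A N"
  shows "finite (equilibrium_points A N) \<and> card (equilibrium_points A N) \<le> n"
proof -
  note inj = inj_on_fst_equilibrium_points[OF assms(3)]
  have "finite (equilibrium_points A N)"
    using inj_on_finite[OF inj fst_equilibrium_points_subset assms(1)] .
  moreover have "card (equilibrium_points A N) \<le> card A"
    using card_inj_on_le[OF inj fst_equilibrium_points_subset assms(1)] .
  ultimately show ?thesis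
    using assms(2) by simp
qed

end
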